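(* Let $(M,d)$ be a complete pointed metric space and $f\in\mathrm{Lip}_0(M,M)$, and assume there is $v\in\mathrm{span}(\delta(M))\cap A_{\widehat f}$. Then $A_{\widehat f}$ is dense in $\mathcal F(M)$. In particular, this holds if $\mathrm{int}(A_{\widehat f})\neq\emptyset$ or if there is $x\in M$ with $d(0,f^n(x))\to\infty$.
   Context: A pointed metric space is a metric space with a distinguished point $0$. $\mathrm{Lip}_0(M,M)$ denotes the Lipschitz maps $f:M\to M$ with $f(0)=0$; $\mathrm{Lip}_0(M)$ the real-valued Lipschitz functions vanishing at $0$ normed by the Lipschitz constant. $\delta:M\to\mathrm{Lip}_0(M)^*$, $\delta(x)(\varphi)=\varphi(x)$; $\mathcal F(M)$ is the norm-closed linear span of $\delta(M)$. $\widehat f$ is the unique bounded linear operator on $\mathcal F(M)$ with $\widehat f(\delta(x))=\delta(f(x))$. For an operator $T$, $A_T=\{\mu:\lim_n\|T^n\mu\|=\infty\}$. *)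

theory Defs
  imports "HOL-Analysis.Analysis"
begin

text \<open>Elements of Lip_0(M)^* are represented as functions (('a => real) => real),
  required to vanish outside Lip_0(M) (extensionality), so that they are
  determined by their values on Lip_0(M).\<close>

definition Lip0 :: "'a::metric_space \<Rightarrow> ('a \<Rightarrow> real) set" where
  "Lip0 z = {\<phi>. \<phi> z = 0 \<and> (\<exists>L. L-lipschitz_on UNIV \<phi>)}"

definition LipBall :: "'a::metric_space \<Rightarrow> ('a \<Rightarrow> real) set" where
  "LipBall z = {\<phi>. \<phi> z = 0 \<and> 1-lipschitz_on UNIV \<phi>}"

definition dnorm :: "'a::metric_space \<Rightarrow> (('a \<Rightarrow> real) \<Rightarrow> real) \<Rightarrow> real" where
  "dnorm z \<mu> = (SUP \<phi>\<in>LipBall z. \<bar>\<mu> \<phi>\<bar>)"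

definition delta :: "'a::metric_space \<Rightarrow> 'a \<Rightarrow> ('a \<Rightarrow> real) \<Rightarrow> real" where
  "delta z x = (\<lambda>\<phi>. if \<phi> \<in> Lip0 z then \<phi> x else 0)"

definition span_delta :: "'a::metric_space \<Rightarrow> (('a \<Rightarrow> real) \<Rightarrow> real) set" where
  "span_delta z = {\<mu>. \<exists>S a. finite S \<and> \<mu> = (\<lambda>\<phi>. \<Sum>x\<in>S. a x * delta z x \<phi>)}"

definition Free :: "'a::metric_space \<Rightarrow> (('a \<Rightarrow> real) \<Rightarrow> real) set" where
  "Free z = {\<mu>. (\<forall>\<phi>. \<phi> \<notin> Lip0 z \<longrightarrow> \<mu> \<phi> = 0) \<and>
     (\<forall>e>0. \<exists>\<nu>\<in>span_delta z. \<forall>\<phi>\<in>LipBall z. \<bar>\<mu> \<phi> - \<nu> \<phi>\<bar> \<le> e)}"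

definition is_lin_hat :: "'a::metric_space \<Rightarrow> ('a \<Rightarrow> 'a)
    \<Rightarrow> ((('a \<Rightarrow> real) \<Rightarrow> real) \<Rightarrow> (('a \<Rightarrow> real) \<Rightarrow> real)) \<Rightarrow> bool" where
  "is_lin_hat z f T \<longleftrightarrow>
     (\<forall>\<mu>\<in>Free z. T \<mu> \<in> Free z) \<and>
     (\<forall>\<mu>\<in>Free z. \<forall>\<nu>\<in>Free z. T (\<lambda>\<phi>. \<mu> \<phi> + \<nu> \<phi>) = (\<lambda>\<phi>. T \<mu> \<phi> + T \<nu> \<phi>)) \<and>
     (\<forall>\<mu>\<in>Free z. \<forall>c::real. T (\<lambda>\<phi>. c * \<mu> \<phi>) = (\<lambda>\<phi>. c * T \<mu> \<phi>)) \<and>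
     (\<exists>C. \<forall>\<mu>\<in>Free z. dnorm z (T \<mu>) \<le> C * dnorm z \<mu>) \<and>
     (\<forall>x. T (delta z x) = delta z (f x))"

definition A_set :: "'a::metric_space \<Rightarrow> ((('a \<Rightarrow> real) \<Rightarrow> real) \<Rightarrow> (('a \<Rightarrow> real) \<Rightarrow> real))
    \<Rightarrow> (('a \<Rightarrow> real) \<Rightarrow> real) set" where
  "A_set z T = {\<mu>\<in>Free z. filterlim (\<lambda>n. dnorm z ((T ^^ n) \<mu>)) at_top sequentially}"

end

theory Submission
  imports Defs
begin

text \<open>
  Given \<open>v \<in> span \<delta>(M) \<inter> A\<^sub>T\<close> and \<open>\<mu> \<in> \<F>(M)\<close>, approximate \<open>\<mu>\<close> by
  \<open>u \<in> span \<delta>(M)\<close> and write \<open>u = \<Sum> a\<^sub>x \<delta>(x)\<close>, \<open>v = \<Sum> b\<^sub>x \<delta>(x)\<close> over a common finite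
  support \<open>S\<close>. For all but finitely many \<open>t\<close>, every \<open>C \<subseteq> S\<close> with \<open>\<Sum>\<^sub>C b \<noteq> 0\<close> also has
  \<open>\<Sum>\<^sub>C (a + t b) \<noteq> 0\<close>; choose such a small \<open>t > 0\<close>, so that \<open>\<nu> = u + t v\<close> is close to \<open>\<mu>\<close>.
  Both \<open>T\<^sup>n \<nu>\<close> and \<open>T\<^sup>n v\<close> are combinations of the deltas of the points \<open>f\<^sup>n(x)\<close>, \<open>x \<in> S\<close>.
  At any scale \<open>R\<close>, pigeonhole gives \<open>r \<in> [R, 2\<^bsup>(|S|+1)\<^sup>2\<^esup> R]\<close> such that no distance
  among \<open>0\<close> and these points lies in \<open>(r, 2r]\<close>; then "distance \<open>\<le> r\<close>" partitions the points into
  clusters more than \<open>2r\<close> apart. If every cluster away from \<open>0\<close> carries \<open>b\<close>-sum zero, then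
  \<open>\<parallel>T\<^sup>n v\<parallel> \<le> r \<Sum>|b|\<close>; otherwise a bump function on such a cluster shows
  \<open>\<parallel>T\<^sup>n \<nu>\<parallel> \<ge> \<kappa> r \<ge> \<kappa> R\<close>, where \<open>\<kappa> > 0\<close> is the least \<open>|\<Sum>\<^sub>C (a + t b)|\<close> over those
  \<open>C\<close>. As \<open>\<parallel>T\<^sup>n v\<parallel> \<rightarrow> \<infinity>\<close>, the first alternative eventually fails at every scale \<open>R\<close>,
  hence \<open>\<nu> \<in> A\<^sub>T\<close>. The two sufficient conditions produce such a \<open>v\<close> directly: an element of
  \<open>span \<delta>(M)\<close> close to an interior point, or \<open>\<delta>(x)\<close>, whose iterates have norm \<open>d(0, f\<^sup>n x)\<close>.
\<close>

section \<open>Finite combinations of point evaluations\<close>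

text \<open>\<open>delta_comb z S c p\<close> is \<open>\<Sum>\<^sub>k\<^sub>\<in>\<^sub>S c\<^sub>k \<delta>(p\<^sub>k)\<close>; the points \<open>p\<^sub>k\<close> need not be distinct, which
  lets \<open>T\<^sup>n\<close> act by composing \<open>p\<close> with \<open>f\<^sup>n\<close> while the coefficients stay fixed.\<close>

definition delta_comb ::
    "'a::metric_space \<Rightarrow> 'i set \<Rightarrow> ('i \<Rightarrow> real) \<Rightarrow> ('i \<Rightarrow> 'a) \<Rightarrow> ('a \<Rightarrow> real) \<Rightarrow> real"
  where "delta_comb z S c p = (\<lambda>\<phi>. \<Sum>k\<in>S. c k * delta z (p k) \<phi>)"

lemma LipBallI:
  assumes "\<psi> z = 0" and "\<And>x y. \<bar>\<psi> x - \<psi> y\<bar> \<le> dist x y"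
  shows "\<psi> \<in> LipBall z"
  unfolding LipBall_def using assms by (auto intro!: lipschitz_onI simp: dist_real_def)

lemma LipBall_abs_diff_le: "\<phi> \<in> LipBall z \<Longrightarrow> \<bar>\<phi> x - \<phi> y\<bar> \<le> dist x y"
  unfolding LipBall_def using lipschitz_onD[of 1 UNIV \<phi> x y] by (auto simp: dist_real_def)

lemma LipBall_abs_le: "\<phi> \<in> LipBall z \<Longrightarrow> \<bar>\<phi> x\<bar> \<le> dist x z"
  using LipBall_abs_diff_le[of \<phi> z x z] by (simp add: LipBall_def)

lemma zero_in_LipBall: "(\<lambda>_. 0) \<in> LipBall z"
  by (rule LipBallI) auto

lemma delta_LipBall: "\<phi> \<in> LipBall z \<Longrightarrow> delta z x \<phi> = \<phi> x"
  unfolding delta_def LipBall_def Lip0_def by auto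

lemma delta_comb_LipBall:
  "\<phi> \<in> LipBall z \<Longrightarrow> delta_comb z S c p \<phi> = (\<Sum>k\<in>S. c k * \<phi> (p k))"
  by (simp add: delta_comb_def delta_LipBall)

lemma dnorm_le: "(\<And>\<phi>. \<phi> \<in> LipBall z \<Longrightarrow> \<bar>\<mu> \<phi>\<bar> \<le> B) \<Longrightarrow> dnorm z \<mu> \<le> B"
  unfolding dnorm_def using zero_in_LipBall by (intro cSUP_least) auto

lemma bdd_above_delta_comb:
  assumes "finite S"
  shows "bdd_above ((\<lambda>\<phi>. \<bar>delta_comb z S c p \<phi>\<bar>) ` LipBall z)"
proof (rule bdd_aboveI2)
  fix \<phi> assume \<phi>: "\<phi> \<in> LipBall z"
  have "\<bar>delta_comb z S c p \<phi>\<bar> \<le> (\<Sum>k\<in>S. \<bar>c k * \<phi> (p k)\<bar>)"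
    unfolding delta_comb_LipBall[OF \<phi>] by (rule sum_abs)
  also have "\<dots> = (\<Sum>k\<in>S. \<bar>c k\<bar> * \<bar>\<phi> (p k)\<bar>)"
    by (simp add: abs_mult)
  also have "\<dots> \<le> (\<Sum>k\<in>S. \<bar>c k\<bar> * dist (p k) z)"
    by (intro sum_mono mult_left_mono LipBall_abs_le[OF \<phi>]) auto
  finally show "\<bar>delta_comb z S c p \<phi>\<bar> \<le> (\<Sum>k\<in>S. \<bar>c k\<bar> * dist (p k) z)" .
qed

lemma abs_delta_comb_le_dnorm:
  "finite S \<Longrightarrow> \<phi> \<in> LipBall z \<Longrightarrow> \<bar>delta_comb z S c p \<phi>\<bar> \<le> dnorm z (delta_comb z S c p)"
  unfolding dnorm_def by (rule cSUP_upper) (simp_all add: bdd_above_delta_comb)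

lemma delta_eq_delta_comb: "delta z x = delta_comb z {x} (\<lambda>_. 1) id"
  by (simp add: delta_comb_def)

lemma dist_le_dnorm_delta: "dist x z \<le> dnorm z (delta z x)"
proof -
  have "(\<lambda>w. dist w z) \<in> LipBall z"
  proof (rule LipBallI)
    show "\<bar>dist x' z - dist y z\<bar> \<le> dist x' y" for x' y
      using abs_dist_diff_le[of x' z y] by (simp add: dist_commute)
  qed simp
  then show ?thesis
    using abs_delta_comb_le_dnorm[of "{x}" "\<lambda>w. dist w z" z "\<lambda>_. 1" id]
    by (simp add: delta_LipBall flip: delta_eq_delta_comb)
qed

lemma delta_comb_in_span_delta:
  assumes "finite S"
  shows "delta_comb z S c p \<in> span_delta z"
proof -
  have "delta_comb z S c p = (\<lambda>\<phi>. \<Sum>x\<in>p ` S. (\<Sum>k\<in>{k\<in>S. p k = x}. c k) * delta z x \<phi>)"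
    unfolding delta_comb_def
    by (intro ext, subst sum.image_gen[OF assms, of _ p]) (simp add: sum_distrib_right)
  then show ?thesis
    unfolding span_delta_def using assms
    by (intro CollectI exI[of _ "p ` S"] exI[of _ "\<lambda>x. \<Sum>k\<in>{k\<in>S. p k = x}. c k"]) simp
qed

lemma span_deltaE:
  assumes "\<mu> \<in> span_delta z"
  obtains S a where "finite S" and "\<mu> = delta_comb z S a id"
  using assms unfolding span_delta_def delta_comb_def by auto

lemma span_delta_subset_Free: "span_delta z \<subseteq> Free z"
proof
  fix \<mu> assume \<mu>: "\<mu> \<in> span_delta z"
  then obtain S a where "\<mu> = delta_comb z S a id" by (rule span_deltaE)
  then have "\<forall>\<phi>. \<phi> \<notin> Lip0 z \<longrightarrow> \<mu> \<phi> = 0"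
    by (simp add: delta_comb_def delta_def)
  then show "\<mu> \<in> Free z"
    unfolding Free_def using \<mu> by (auto intro: bexI[of _ \<mu>])
qed

lemma delta_comb_in_Free: "finite S \<Longrightarrow> delta_comb z S c p \<in> Free z"
  using delta_comb_in_span_delta span_delta_subset_Free by blast

lemma delta_in_span_delta: "delta z x \<in> span_delta z"
  using delta_comb_in_span_delta[of "{x}" z "\<lambda>_. 1" id] by (simp add: delta_eq_delta_comb)

lemma delta_in_Free: "delta z x \<in> Free z"
  using delta_in_span_delta span_delta_subset_Free by blast

lemma span_delta_common_support:
  assumes "u \<in> span_delta z" and "v \<in> span_delta z"
  obtains S a b where "finite S" and "u = delta_comb z S a id" and "v = delta_comb z S b id"
proof -
  obtain S1 a where S1: "finite S1" and u: "u = delta_comb z S1 a id"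
    using assms(1) by (rule span_deltaE)
  obtain S2 b where S2: "finite S2" and v: "v = delta_comb z S2 b id"
    using assms(2) by (rule span_deltaE)
  have extend: "delta_comb z T c id = delta_comb z (S1 \<union> S2) (\<lambda>x. if x \<in> T then c x else 0) id"
    if "T \<subseteq> S1 \<union> S2" for T c
    unfolding delta_comb_def using S1 S2 that
    by (intro ext sum.mono_neutral_cong_left) auto
  show thesis
  proof (rule that)
    show "finite (S1 \<union> S2)" using S1 S2 by simp
    show "u = delta_comb z (S1 \<union> S2) (\<lambda>x. if x \<in> S1 then a x else 0) id"
      unfolding u by (rule extend) simp
    show "v = delta_comb z (S1 \<union> S2) (\<lambda>x. if x \<in> S2 then b x else 0) id"
      unfolding v by (rule extend) simp
  qed
qed

lemma span_delta_approx:
  assumes "\<mu> \<in> Free z" and "e > 0"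
  obtains u where "u \<in> span_delta z" and "\<And>\<phi>. \<phi> \<in> LipBall z \<Longrightarrow> \<bar>u \<phi> - \<mu> \<phi>\<bar> \<le> e"
proof -
  have "\<exists>u\<in>span_delta z. \<forall>\<phi>\<in>LipBall z. \<bar>\<mu> \<phi> - u \<phi>\<bar> \<le> e"
    using assms unfolding Free_def by simp
  then show thesis
    using that by (auto simp: abs_minus_commute)
qed

lemma is_lin_hat_add:
  "is_lin_hat z f T \<Longrightarrow> \<mu> \<in> Free z \<Longrightarrow> \<nu> \<in> Free z
    \<Longrightarrow> T (\<lambda>\<phi>. \<mu> \<phi> + \<nu> \<phi>) = (\<lambda>\<phi>. T \<mu> \<phi> + T \<nu> \<phi>)"
  unfolding is_lin_hat_def by (elim conjE) simp

lemma is_lin_hat_scale: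
  "is_lin_hat z f T \<Longrightarrow> \<mu> \<in> Free z \<Longrightarrow> T (\<lambda>\<phi>. c * \<mu> \<phi>) = (\<lambda>\<phi>. c * T \<mu> \<phi>)"
  unfolding is_lin_hat_def by (elim conjE) simp

lemma is_lin_hat_delta: "is_lin_hat z f T \<Longrightarrow> T (delta z x) = delta z (f x)"
  unfolding is_lin_hat_def by (elim conjE) simp

lemma is_lin_hat_scaled_delta:
  "is_lin_hat z f T \<Longrightarrow> T (\<lambda>\<phi>. c * delta z x \<phi>) = (\<lambda>\<phi>. c * delta z (f x) \<phi>)"
  by (simp add: is_lin_hat_scale[OF _ delta_in_Free] is_lin_hat_delta)

lemma is_lin_hat_delta_comb:
  assumes T: "is_lin_hat z f T" and "finite S"
  shows "T (delta_comb z S c p) = delta_comb z S c (f \<circ> p)"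
  using \<open>finite S\<close>
proof (induction S rule: finite_induct)
  case empty
  show ?case
    using is_lin_hat_scaled_delta[OF T, of 0 z] by (simp add: delta_comb_def)
next
  case (insert k S)
  have single_Free: "(\<lambda>\<phi>. c k * delta z (p k) \<phi>) \<in> Free z"
    using delta_comb_in_Free[of "{k}" z c p] by (simp add: delta_comb_def)
  have "T (delta_comb z (insert k S) c p)
      = T (\<lambda>\<phi>. c k * delta z (p k) \<phi> + delta_comb z S c p \<phi>)"
    using insert(1,2) by (simp add: delta_comb_def)
  also have "\<dots> = (\<lambda>\<phi>. T (\<lambda>\<phi>. c k * delta z (p k) \<phi>) \<phi> + T (delta_comb z S c p) \<phi>)"
    by (rule is_lin_hat_add[OF T single_Free delta_comb_in_Free[OF insert(1)]])
  also have "\<dots> = (\<lambda>\<phi>. c k * delta z (f (p k)) \<phi> + delta_comb z S c (f \<circ> p) \<phi>)"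
    by (simp only: is_lin_hat_scaled_delta[OF T] insert.IH)
  also have "\<dots> = delta_comb z (insert k S) c (f \<circ> p)"
    using insert(1,2) by (simp add: delta_comb_def)
  finally show ?case .
qed

lemma is_lin_hat_pow_delta_comb:
  assumes "is_lin_hat z f T" and "finite S"
  shows "(T ^^ n) (delta_comb z S c p) = delta_comb z S c ((f ^^ n) \<circ> p)"
  by (induction n) (simp_all add: is_lin_hat_delta_comb[OF assms] comp_def)

lemma is_lin_hat_pow_delta:
  assumes "is_lin_hat z f T"
  shows "(T ^^ n) (delta z x) = delta z ((f ^^ n) x)"
  using is_lin_hat_pow_delta_comb[OF assms, of "{x}" n "\<lambda>_. 1" id]
  by (simp add: delta_comb_def)

section \<open>Clusters at a scale with a distance gap\<close>

definition dist_gap :: "real \<Rightarrow> 'a::metric_space set \<Rightarrow> bool"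
  where "dist_gap r P \<longleftrightarrow> (\<forall>x\<in>P. \<forall>y\<in>P. dist x y \<le> 2 * r \<longrightarrow> dist x y \<le> r)"

lemma exists_dyadic_gap:
  fixes R :: real
  assumes "finite D" and "card D \<le> m" and "R > 0"
  shows "\<exists>i\<le>m. \<forall>d\<in>D. \<not> (2 ^ i * R < d \<and> d \<le> 2 ^ Suc i * R)"
proof (rule ccontr)
  assume "\<not> ?thesis"
  then obtain g where g: "\<And>i. i \<le> m \<Longrightarrow> g i \<in> D \<and> 2 ^ i * R < g i \<and> g i \<le> 2 ^ Suc i * R"
    by metis
  have g_less: "g i < g j" if "i < j" and "j \<le> m" for i j
  proof -
    have "(2::real) ^ Suc i \<le> 2 ^ j"
      using that by (intro power_increasing) auto
    then have "2 ^ Suc i * R \<le> 2 ^ j * R"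
      using assms(3) by simp
    then show ?thesis
      using g[of i] g[of j] that by linarith
  qed
  have "inj_on g {..m}"
    by (rule inj_onI) (metis atMost_iff g_less less_irrefl linorder_neq_iff)
  then have "card {..m} \<le> card D"
    by (rule card_inj_on_le) (use g assms(1) in auto)
  then show False
    using assms(2) by simp
qed

lemma exists_dist_gap:
  fixes P :: "'a::metric_space set"
  assumes "finite P" and "R > 0"
  obtains r where "R \<le> r" and "r \<le> 2 ^ (card P ^ 2) * R" and "dist_gap r P"
proof -
  let ?D = "(\<lambda>(x, y). dist x y) ` (P \<times> P)"
  have "card ?D \<le> card (P \<times> P)"
    using assms(1) by (intro card_image_le) simp
  then have "card ?D \<le> card P ^ 2"
    by (simp add: card_cartesian_product power2_eq_square)
  then have "\<exists>i\<le>card P ^ 2. \<forall>d\<in>?D. \<not> (2 ^ i * R < d \<and> d \<le> 2 ^ Suc i * R)"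
    using assms by (intro exists_dyadic_gap) auto
  then obtain i where i: "i \<le> card P ^ 2"
    and gap: "\<forall>d\<in>?D. \<not> (2 ^ i * R < d \<and> d \<le> 2 ^ Suc i * R)"
    by blast
  show thesis
  proof (rule that)
    show "R \<le> 2 ^ i * R"
      using assms(2) by simp
    show "2 ^ i * R \<le> 2 ^ (card P ^ 2) * R"
      using assms(2) i by (intro mult_right_mono power_increasing) auto
    show "dist_gap (2 ^ i * R) P"
      unfolding dist_gap_def using gap by force
  qed
qed

definition cluster_rel :: "real \<Rightarrow> ('i \<Rightarrow> 'a::metric_space) \<Rightarrow> 'i set \<Rightarrow> ('i \<times> 'i) set"
  where "cluster_rel r p S = {(j, k). j \<in> S \<and> k \<in> S \<and> dist (p j) (p k) \<le> r}"

lemma cluster_rel_Image: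
  "j \<in> S \<Longrightarrow> cluster_rel r p S `` {j} = {k\<in>S. dist (p j) (p k) \<le> r}"
  by (auto simp: cluster_rel_def)

lemma equiv_cluster_rel:
  assumes gap: "dist_gap r (p ` S)" and "r \<ge> 0"
  shows "equiv S (cluster_rel r p S)"
  unfolding cluster_rel_def
proof (rule equivI)
  show "{(j, k). j \<in> S \<and> k \<in> S \<and> dist (p j) (p k) \<le> r} \<subseteq> S \<times> S"
    by auto
  show "refl_on S {(j, k). j \<in> S \<and> k \<in> S \<and> dist (p j) (p k) \<le> r}"
    using \<open>r \<ge> 0\<close> by (auto simp: refl_on_def)
  show "sym {(j, k). j \<in> S \<and> k \<in> S \<and> dist (p j) (p k) \<le> r}"
    by (auto simp: sym_def dist_commute)
  have "dist (p i) (p k) \<le> r"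
    if "i \<in> S" "k \<in> S" "dist (p i) (p j) \<le> r" "dist (p j) (p k) \<le> r" for i j k
    using gap that dist_triangle[of "p i" "p k" "p j"] unfolding dist_gap_def by force
  then show "trans {(j, k). j \<in> S \<and> k \<in> S \<and> dist (p j) (p k) \<le> r}"
    by (auto simp: trans_def)
qed

lemma exists_cluster_centres:
  assumes "r \<ge> 0" and gap: "dist_gap r (insert z (p ` S))"
  obtains q where "\<And>k. k \<in> S \<Longrightarrow> dist (p k) (q k) \<le> r"
    and "\<And>j k. (j, k) \<in> cluster_rel r p S \<Longrightarrow> q j = q k"
    and "\<And>k. dist (p k) z \<le> r \<Longrightarrow> q k = z"
proof -
  let ?E = "cluster_rel r p S"
  have eqv: "equiv S ?E"
    using gap \<open>r \<ge> 0\<close> by (intro equiv_cluster_rel) (auto simp: dist_gap_def)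
  have near_if_near: "dist (p j) z \<le> r"
    if "j \<in> S" "dist (p j) (p k) \<le> r" "dist (p k) z \<le> r" for j k
  proof -
    have "dist (p j) z \<le> 2 * r"
      using that dist_triangle[of "p j" z "p k"] by linarith
    then show ?thesis
      using gap that(1) unfolding dist_gap_def by blast
  qed
  have far_iff: "r < dist (p j) z \<longleftrightarrow> r < dist (p k) z" if "(j, k) \<in> ?E" for j k
    using that near_if_near[of j k] near_if_near[of k j] by (force simp: cluster_rel_def dist_commute)
  define q where "q k = (if r < dist (p k) z then p (SOME j. j \<in> ?E `` {k}) else z)" for k
  show thesis
  proof (rule that)
    show "dist (p k) (q k) \<le> r" if "k \<in> S" for k
    proof (cases "r < dist (p k) z")
      case True
      have "k \<in> ?E `` {k}"
        using eqv that by (auto simp: equiv_def refl_on_def)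
      then have "(SOME j. j \<in> ?E `` {k}) \<in> ?E `` {k}"
        by (rule someI)
      moreover have "dist (p k) (p j) \<le> r" if "j \<in> ?E `` {k}" for j
        using that by (simp add: cluster_rel_def)
      ultimately show ?thesis
        using True by (simp add: q_def)
    qed (simp add: q_def)
    show "q j = q k" if "(j, k) \<in> ?E" for j k
      using that far_iff[OF that] equiv_class_eq[OF eqv that] by (simp add: q_def)
    show "q k = z" if "dist (p k) z \<le> r" for k
      using that by (simp add: q_def)
  qed
qed

lemma sum_eq_0_if_class_sums_eq_0:
  assumes "finite A" and eqv: "equiv A E" and "\<And>X. X \<in> A // E \<Longrightarrow> sum h X = 0"
  shows "sum h A = 0"
proof -
  have "sum h A = sum h (\<Union>(A // E))"
    using eqv by (simp add: Union_quotient)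
  also have "\<dots> = sum (sum h) (A // E)"
    using finite_equiv_class[OF \<open>finite A\<close> equiv_type[OF eqv]] quotient_disj[OF eqv]
    by (subst sum.Union_disjoint) auto
  also have "\<dots> = 0"
    using assms(3) by simp
  finally show ?thesis .
qed

lemma dnorm_delta_comb_le_if_far_clusters_cancel:
  assumes "finite S" and "r \<ge> 0" and gap: "dist_gap r (insert z (p ` S))"
    and cancel: "\<And>j. j \<in> S \<Longrightarrow> r < dist (p j) z \<Longrightarrow> (\<Sum>k\<in>{k\<in>S. dist (p j) (p k) \<le> r}. b k) = 0"
  shows "dnorm z (delta_comb z S b p) \<le> r * (\<Sum>k\<in>S. \<bar>b k\<bar>)"
proof (rule dnorm_le)
  fix \<phi> assume \<phi>: "\<phi> \<in> LipBall z"
  obtain q where q_near: "\<And>k. k \<in> S \<Longrightarrow> dist (p k) (q k) \<le> r"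
    and q_class: "\<And>j k. (j, k) \<in> cluster_rel r p S \<Longrightarrow> q j = q k"
    and q_z: "\<And>k. dist (p k) z \<le> r \<Longrightarrow> q k = z"
    using exists_cluster_centres[OF \<open>r \<ge> 0\<close> gap] by blast
  have eqv: "equiv S (cluster_rel r p S)"
    using gap \<open>r \<ge> 0\<close> by (intro equiv_cluster_rel) (auto simp: dist_gap_def)
  have "(\<Sum>k\<in>S. b k * \<phi> (q k)) = 0"
  proof (rule sum_eq_0_if_class_sums_eq_0[OF \<open>finite S\<close> eqv])
    fix X assume "X \<in> S // cluster_rel r p S"
    then obtain j where j: "j \<in> S" and X: "X = cluster_rel r p S `` {j}"
      by (rule quotientE)
    have "(\<Sum>k\<in>X. b k * \<phi> (q k)) = (\<Sum>k\<in>X. b k) * \<phi> (q j)"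
      unfolding X by (simp add: sum_distrib_right q_class)
    also have "\<dots> = 0"
    proof (cases "r < dist (p j) z")
      case True
      then show ?thesis
        using cancel[OF j] by (simp add: X cluster_rel_Image[OF j])
    next
      case False
      then show ?thesis
        using q_z[of j] \<phi> by (simp add: LipBall_def)
    qed
    finally show "(\<Sum>k\<in>X. b k * \<phi> (q k)) = 0" .
  qed
  then have "\<bar>delta_comb z S b p \<phi>\<bar> = \<bar>\<Sum>k\<in>S. b k * (\<phi> (p k) - \<phi> (q k))\<bar>"
    by (simp add: delta_comb_LipBall[OF \<phi>] right_diff_distrib sum_subtractf)
  also have "\<dots> \<le> (\<Sum>k\<in>S. \<bar>b k * (\<phi> (p k) - \<phi> (q k))\<bar>)"
    by (rule sum_abs)
  also have "\<dots> = (\<Sum>k\<in>S. \<bar>b k\<bar> * \<bar>\<phi> (p k) - \<phi> (q k)\<bar>)"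
    by (simp add: abs_mult)
  also have "\<dots> \<le> (\<Sum>k\<in>S. \<bar>b k\<bar> * r)"
    using LipBall_abs_diff_le[OF \<phi>] q_near
    by (intro sum_mono mult_left_mono) (auto intro: order_trans)
  finally show "\<bar>delta_comb z S b p \<phi>\<bar> \<le> r * (\<Sum>k\<in>S. \<bar>b k\<bar>)"
    by (simp add: sum_distrib_left mult.commute)
qed

lemma bump_in_LipBall:
  assumes "r \<ge> 0" and "2 * r \<le> dist z y"
  shows "(\<lambda>x. min r (max 0 (2 * r - dist x y))) \<in> LipBall z"
proof (rule LipBallI)
  show "min r (max 0 (2 * r - dist z y)) = 0"
    using assms by simp
  fix x x' :: 'a
  have "\<bar>min r (max 0 (2 * r - dist x y)) - min r (max 0 (2 * r - dist x' y))\<bar>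
      \<le> \<bar>dist x y - dist x' y\<bar>"
    by (simp add: min_def max_def abs_if)
  also have "\<dots> \<le> dist x x'"
    using abs_dist_diff_le[of x y x'] by (simp add: dist_commute)
  finally show "\<bar>min r (max 0 (2 * r - dist x y)) - min r (max 0 (2 * r - dist x' y))\<bar> \<le> dist x x'" .
qed

lemma cluster_sum_le_dnorm_delta_comb:
  assumes "finite S" and "r > 0" and gap: "dist_gap r (insert z (p ` S))"
    and "j \<in> S" and far: "r < dist (p j) z"
  shows "r * \<bar>\<Sum>k\<in>{k\<in>S. dist (p j) (p k) \<le> r}. c k\<bar> \<le> dnorm z (delta_comb z S c p)"
proof -
  define \<phi> where "\<phi> x = min r (max 0 (2 * r - dist x (p j)))" for x
  have gap_at: "dist x y \<le> r" if "x \<in> insert z (p ` S)" "y \<in> insert z (p ` S)" "dist x y \<le> 2 * r" for x y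
    using gap that unfolding dist_gap_def by blast
  have "2 * r < dist z (p j)"
    using far gap_at[of z "p j"] \<open>j \<in> S\<close> by (force simp: dist_commute)
  then have \<phi>: "\<phi> \<in> LipBall z"
    unfolding \<phi>_def using \<open>r > 0\<close> by (intro bump_in_LipBall) auto
  have \<phi>_at: "\<phi> (p k) = (if dist (p j) (p k) \<le> r then r else 0)" if "k \<in> S" for k
  proof -
    have "dist (p j) (p k) \<le> r \<or> 2 * r < dist (p j) (p k)"
      using gap_at[of "p j" "p k"] that \<open>j \<in> S\<close> by force
    then show ?thesis
      using \<open>r > 0\<close> by (auto simp: \<phi>_def dist_commute)
  qed
  have "delta_comb z S c p \<phi> = (\<Sum>k\<in>S. r * (if dist (p j) (p k) \<le> r then c k else 0))"
    unfolding delta_comb_LipBall[OF \<phi>] by (intro sum.cong) (simp_all add: \<phi>_at)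
  also have "\<dots> = r * (\<Sum>k\<in>{k\<in>S. dist (p j) (p k) \<le> r}. c k)"
    using \<open>finite S\<close> by (simp add: sum.inter_filter sum_distrib_left)
  finally have "r * \<bar>\<Sum>k\<in>{k\<in>S. dist (p j) (p k) \<le> r}. c k\<bar> = \<bar>delta_comb z S c p \<phi>\<bar>"
    using \<open>r > 0\<close> by (simp add: abs_mult)
  also have "\<dots> \<le> dnorm z (delta_comb z S c p)"
    by (rule abs_delta_comb_le_dnorm[OF \<open>finite S\<close> \<phi>])
  finally show ?thesis .
qed

lemma dnorm_delta_comb_dichotomy:
  assumes "finite S" and "R > 0" and "\<kappa> > 0"
    and sep: "\<And>C. C \<subseteq> S \<Longrightarrow> (\<Sum>k\<in>C. b k) \<noteq> 0 \<Longrightarrow> \<kappa> \<le> \<bar>\<Sum>k\<in>C. c k\<bar>"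
  shows "\<kappa> * R \<le> dnorm z (delta_comb z S c p)
    \<or> dnorm z (delta_comb z S b p) \<le> 2 ^ ((card S + 1) ^ 2) * R * (\<Sum>k\<in>S. \<bar>b k\<bar>)"
proof -
  let ?P = "insert z (p ` S)"
  obtain r where "R \<le> r" and r_le: "r \<le> 2 ^ (card ?P ^ 2) * R" and gap: "dist_gap r ?P"
    using exists_dist_gap[of ?P R] \<open>finite S\<close> \<open>R > 0\<close> by auto
  have "card ?P \<le> Suc (card (p ` S))"
    using \<open>finite S\<close> by (simp add: card_insert_if)
  then have "card ?P \<le> card S + 1"
    using card_image_le[OF \<open>finite S\<close>, of p] by simp
  then have "(2::real) ^ (card ?P ^ 2) \<le> 2 ^ ((card S + 1) ^ 2)"
    by (intro power_increasing power_mono) auto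
  then have "r \<le> 2 ^ ((card S + 1) ^ 2) * R"
    using r_le \<open>R > 0\<close> by (meson mult_right_mono less_imp_le order_trans)
  show ?thesis
  proof (cases "\<exists>j\<in>S. r < dist (p j) z \<and> (\<Sum>k\<in>{k\<in>S. dist (p j) (p k) \<le> r}. b k) \<noteq> 0")
    case True
    then obtain j where j: "j \<in> S" "r < dist (p j) z"
      and "(\<Sum>k\<in>{k\<in>S. dist (p j) (p k) \<le> r}. b k) \<noteq> 0" by blast
    then have "\<kappa> \<le> \<bar>\<Sum>k\<in>{k\<in>S. dist (p j) (p k) \<le> r}. c k\<bar>"
      by (intro sep) auto
    then have "\<kappa> * R \<le> r * \<bar>\<Sum>k\<in>{k\<in>S. dist (p j) (p k) \<le> r}. c k\<bar>"
      using \<open>R \<le> r\<close> \<open>R > 0\<close> \<open>\<kappa> > 0\<close> by (simp add: mult.commute mult_mono)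
    also have "\<dots> \<le> dnorm z (delta_comb z S c p)"
      using \<open>R \<le> r\<close> \<open>R > 0\<close> by (intro cluster_sum_le_dnorm_delta_comb[OF \<open>finite S\<close> _ gap j]) auto
    finally show ?thesis ..
  next
    case False
    then have "dnorm z (delta_comb z S b p) \<le> r * (\<Sum>k\<in>S. \<bar>b k\<bar>)"
      using \<open>R \<le> r\<close> \<open>R > 0\<close>
      by (intro dnorm_delta_comb_le_if_far_clusters_cancel[OF \<open>finite S\<close> _ gap]) auto
    also have "\<dots> \<le> 2 ^ ((card S + 1) ^ 2) * R * (\<Sum>k\<in>S. \<bar>b k\<bar>)"
      by (intro mult_right_mono \<open>r \<le> 2 ^ ((card S + 1) ^ 2) * R\<close>) (simp add: sum_nonneg)
    finally show ?thesis ..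
  qed
qed

section \<open>Density of \<open>A\<^sub>T\<close>\<close>

lemma exists_lower_bound_nonzero_subset_sums:
  fixes b c :: "'i \<Rightarrow> real"
  assumes "finite S" and kept: "\<And>C. C \<subseteq> S \<Longrightarrow> (\<Sum>k\<in>C. b k) \<noteq> 0 \<Longrightarrow> (\<Sum>k\<in>C. c k) \<noteq> 0"
  obtains \<kappa> where "\<kappa> > 0" and "\<And>C. C \<subseteq> S \<Longrightarrow> (\<Sum>k\<in>C. b k) \<noteq> 0 \<Longrightarrow> \<kappa> \<le> \<bar>\<Sum>k\<in>C. c k\<bar>"
proof -
  define K where "K = (\<lambda>C. \<bar>\<Sum>k\<in>C. c k\<bar>) ` {C. C \<subseteq> S \<and> (\<Sum>k\<in>C. b k) \<noteq> 0}"
  have "finite K"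
    unfolding K_def using \<open>finite S\<close> by simp
  moreover have "\<forall>y\<in>K. y > 0"
    unfolding K_def using kept by auto
  ultimately show thesis
    using that[of "Min (insert 1 K)"] by (simp add: Min_gr_iff K_def)
qed

lemma delta_comb_in_A_set_if_nonzero_sums_kept:
  assumes T: "is_lin_hat z f T" and "finite S" and b: "delta_comb z S b p \<in> A_set z T"
    and kept: "\<And>C. C \<subseteq> S \<Longrightarrow> (\<Sum>k\<in>C. b k) \<noteq> 0 \<Longrightarrow> (\<Sum>k\<in>C. c k) \<noteq> 0"
  shows "delta_comb z S c p \<in> A_set z T"
proof -
  obtain \<kappa> where "\<kappa> > 0" and sep: "\<And>C. C \<subseteq> S \<Longrightarrow> (\<Sum>k\<in>C. b k) \<noteq> 0 \<Longrightarrow> \<kappa> \<le> \<bar>\<Sum>k\<in>C. c k\<bar>"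
    using exists_lower_bound_nonzero_subset_sums[OF \<open>finite S\<close> kept] by blast
  define m where "m = (card S + 1) ^ 2"
  define W where "W = (\<Sum>k\<in>S. \<bar>b k\<bar>)"
  have b_lim: "filterlim (\<lambda>n. dnorm z (delta_comb z S b ((f ^^ n) \<circ> p))) at_top sequentially"
    using b unfolding A_set_def by (simp add: is_lin_hat_pow_delta_comb[OF T \<open>finite S\<close>])
  have "filterlim (\<lambda>n. dnorm z (delta_comb z S c ((f ^^ n) \<circ> p))) at_top sequentially"
    unfolding filterlim_at_top
  proof
    fix Y :: real
    define R where "R = max 1 (Y / \<kappa>)"
    have "R > 0"
      unfolding R_def by simp
    have "Y = \<kappa> * (Y / \<kappa>)"
      using \<open>\<kappa> > 0\<close> by simp
    also have "\<dots> \<le> \<kappa> * R"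
      using \<open>\<kappa> > 0\<close> by (intro mult_left_mono) (auto simp: R_def)
    finally have "Y \<le> \<kappa> * R" .
    have "eventually (\<lambda>n. 2 ^ m * R * W + 1 \<le> dnorm z (delta_comb z S b ((f ^^ n) \<circ> p))) sequentially"
      using b_lim unfolding filterlim_at_top by blast
    then show "eventually (\<lambda>n. Y \<le> dnorm z (delta_comb z S c ((f ^^ n) \<circ> p))) sequentially"
    proof (rule eventually_mono)
      fix n
      assume "2 ^ m * R * W + 1 \<le> dnorm z (delta_comb z S b ((f ^^ n) \<circ> p))"
      moreover have "\<kappa> * R \<le> dnorm z (delta_comb z S c ((f ^^ n) \<circ> p))
          \<or> dnorm z (delta_comb z S b ((f ^^ n) \<circ> p)) \<le> 2 ^ m * R * W"
        unfolding m_def W_def by (rule dnorm_delta_comb_dichotomy[OF \<open>finite S\<close> \<open>R > 0\<close> \<open>\<kappa> > 0\<close> sep])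
      ultimately show "Y \<le> dnorm z (delta_comb z S c ((f ^^ n) \<circ> p))"
        using \<open>Y \<le> \<kappa> * R\<close> by linarith
    qed
  qed
  then show ?thesis
    unfolding A_set_def using delta_comb_in_Free[OF \<open>finite S\<close>]
    by (simp add: is_lin_hat_pow_delta_comb[OF T \<open>finite S\<close>])
qed

lemma exists_small_scalar_keeping_sums_nonzero:
  fixes a b :: "'i \<Rightarrow> real"
  assumes "finite S" and "\<epsilon> > 0"
  obtains t where "0 < t" and "t < \<epsilon>"
    and "\<And>C. C \<subseteq> S \<Longrightarrow> (\<Sum>k\<in>C. b k) \<noteq> 0 \<Longrightarrow> (\<Sum>k\<in>C. a k + t * b k) \<noteq> 0"
proof -
  define Bad where "Bad = (\<lambda>C. - (\<Sum>k\<in>C. a k) / (\<Sum>k\<in>C. b k)) ` Pow S"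
  have "finite Bad"
    unfolding Bad_def using \<open>finite S\<close> by simp
  then have "infinite ({0<..<\<epsilon>} - Bad)"
    using \<open>\<epsilon> > 0\<close> by (intro Diff_infinite_finite) auto
  then have "{0<..<\<epsilon>} - Bad \<noteq> {}"
    by (rule infinite_imp_nonempty)
  then obtain t where t: "t \<in> {0<..<\<epsilon>}" and "t \<notin> Bad"
    by blast
  show thesis
  proof (rule that)
    show "0 < t" and "t < \<epsilon>"
      using t by auto
    fix C assume "C \<subseteq> S" and b_C: "(\<Sum>k\<in>C. b k) \<noteq> 0"
    then have "t \<noteq> - (\<Sum>k\<in>C. a k) / (\<Sum>k\<in>C. b k)"
      using \<open>t \<notin> Bad\<close> unfolding Bad_def by blast
    then show "(\<Sum>k\<in>C. a k + t * b k) \<noteq> 0"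
      using b_C by (simp add: sum.distrib flip: sum_distrib_left) (simp add: field_simps)
  qed
qed

lemma dnorm_add_scaled_diff_le:
  assumes "\<And>\<phi>. \<phi> \<in> LipBall z \<Longrightarrow> \<bar>u \<phi> - \<mu> \<phi>\<bar> \<le> \<epsilon>"
    and "\<And>\<phi>. \<phi> \<in> LipBall z \<Longrightarrow> \<bar>v \<phi>\<bar> \<le> V" and "t \<ge> 0"
  shows "dnorm z (\<lambda>\<phi>. u \<phi> + t * v \<phi> - \<mu> \<phi>) \<le> \<epsilon> + t * V"
proof (rule dnorm_le)
  fix \<phi> assume "\<phi> \<in> LipBall z"
  have "\<bar>u \<phi> + t * v \<phi> - \<mu> \<phi>\<bar> \<le> \<bar>u \<phi> - \<mu> \<phi>\<bar> + t * \<bar>v \<phi>\<bar>"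
    using \<open>t \<ge> 0\<close> abs_triangle_ineq[of "u \<phi> - \<mu> \<phi>" "t * v \<phi>"]
    by (simp add: abs_mult algebra_simps)
  also have "\<dots> \<le> \<epsilon> + t * V"
    using assms \<open>\<phi> \<in> LipBall z\<close> by (intro add_mono mult_left_mono) auto
  finally show "\<bar>u \<phi> + t * v \<phi> - \<mu> \<phi>\<bar> \<le> \<epsilon> + t * V" .
qed

lemma A_set_dense_if_meets_span_delta:
  assumes T: "is_lin_hat z f T" and "v \<in> span_delta z" and "v \<in> A_set z T"
    and "\<mu> \<in> Free z" and "e > 0"
  shows "\<exists>\<nu>\<in>A_set z T. dnorm z (\<lambda>\<phi>. \<nu> \<phi> - \<mu> \<phi>) < e"
proof -
  obtain u where "u \<in> span_delta z" and u_close: "\<And>\<phi>. \<phi> \<in> LipBall z \<Longrightarrow> \<bar>u \<phi> - \<mu> \<phi>\<bar> \<le> e / 2"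
    using span_delta_approx[OF \<open>\<mu> \<in> Free z\<close>, of "e / 2"] \<open>e > 0\<close> by auto
  obtain S a b where "finite S" and u: "u = delta_comb z S a id" and v: "v = delta_comb z S b id"
    using \<open>u \<in> span_delta z\<close> \<open>v \<in> span_delta z\<close> by (rule span_delta_common_support)
  define V where "V = dnorm z v"
  have v_le: "\<bar>v \<phi>\<bar> \<le> V" if "\<phi> \<in> LipBall z" for \<phi>
    unfolding V_def v by (rule abs_delta_comb_le_dnorm[OF \<open>finite S\<close> that])
  then have "V \<ge> 0"
    using zero_in_LipBall by (meson abs_ge_zero order_trans)
  obtain t where "0 < t" and t_small: "t < e / (2 * (V + 1))"
    and kept: "\<And>C. C \<subseteq> S \<Longrightarrow> (\<Sum>k\<in>C. b k) \<noteq> 0 \<Longrightarrow> (\<Sum>k\<in>C. a k + t * b k) \<noteq> 0"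
    by (rule exists_small_scalar_keeping_sums_nonzero[OF \<open>finite S\<close>,
          where a = a and b = b and \<epsilon> = "e / (2 * (V + 1))"])
      (use \<open>e > 0\<close> \<open>V \<ge> 0\<close> in auto)
  define \<nu> where "\<nu> = delta_comb z S (\<lambda>k. a k + t * b k) id"
  have \<nu>_eq: "\<nu> \<phi> = u \<phi> + t * v \<phi>" for \<phi>
    unfolding \<nu>_def u v delta_comb_def by (simp add: distrib_right sum.distrib sum_distrib_left mult.assoc)
  have "delta_comb z S b id \<in> A_set z T"
    using \<open>v \<in> A_set z T\<close> by (simp only: v)
  then have "\<nu> \<in> A_set z T"
    unfolding \<nu>_def by (rule delta_comb_in_A_set_if_nonzero_sums_kept[OF T \<open>finite S\<close> _ kept])
  moreover have "dnorm z (\<lambda>\<phi>. \<nu> \<phi> - \<mu> \<phi>) < e"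
  proof -
    have "t * V \<le> t * (V + 1)"
      using \<open>0 < t\<close> by simp
    also have "\<dots> < e / 2"
      using t_small \<open>V \<ge> 0\<close> by (simp add: field_simps)
    finally have "t * V < e / 2" .
    moreover have "dnorm z (\<lambda>\<phi>. \<nu> \<phi> - \<mu> \<phi>) \<le> e / 2 + t * V"
      unfolding \<nu>_eq using u_close v_le \<open>0 < t\<close> by (intro dnorm_add_scaled_diff_le) auto
    ultimately show ?thesis
      by linarith
  qed
  ultimately show ?thesis by blast
qed

lemma span_delta_meets_A_set_if_interior:
  assumes "\<mu> \<in> Free z" and "r > 0"
    and ball: "\<forall>\<nu>\<in>Free z. dnorm z (\<lambda>\<phi>. \<nu> \<phi> - \<mu> \<phi>) < r \<longrightarrow> \<nu> \<in> A_set z T"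
  shows "\<exists>v. v \<in> span_delta z \<and> v \<in> A_set z T"
proof -
  obtain u where u: "u \<in> span_delta z" and "\<And>\<phi>. \<phi> \<in> LipBall z \<Longrightarrow> \<bar>u \<phi> - \<mu> \<phi>\<bar> \<le> r / 2"
    using span_delta_approx[OF \<open>\<mu> \<in> Free z\<close>, of "r / 2"] \<open>r > 0\<close> by auto
  then have "dnorm z (\<lambda>\<phi>. u \<phi> - \<mu> \<phi>) < r"
    using \<open>r > 0\<close> dnorm_le[of z "\<lambda>\<phi>. u \<phi> - \<mu> \<phi>" "r / 2"] by simp
  then show ?thesis
    using ball u span_delta_subset_Free by blast
qed

lemma delta_in_A_set_if_orbit_escapes:
  assumes "is_lin_hat z f T" and escape: "filterlim (\<lambda>n. dist z ((f ^^ n) x)) at_top sequentially"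
  shows "delta z x \<in> A_set z T"
proof -
  have "dist z ((f ^^ n) x) \<le> dnorm z ((T ^^ n) (delta z x))" for n
    using dist_le_dnorm_delta[of "(f ^^ n) x" z]
    by (simp add: is_lin_hat_pow_delta[OF assms(1)] dist_commute)
  then have "filterlim (\<lambda>n. dnorm z ((T ^^ n) (delta z x))) at_top sequentially"
    by (intro filterlim_at_top_mono[OF escape]) auto
  then show ?thesis
    unfolding A_set_def using delta_in_Free by blast
qed

theorem theorem5p4:
  fixes z :: "'a::metric_space" and f :: "'a \<Rightarrow> 'a"
    and T :: "(('a \<Rightarrow> real) \<Rightarrow> real) \<Rightarrow> (('a \<Rightarrow> real) \<Rightarrow> real)"
  assumes "complete (UNIV :: 'a set)"
    and "f z = z" and "\<exists>L. L-lipschitz_on UNIV f"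
    and "is_lin_hat z f T"
  shows "((\<exists>v. v \<in> span_delta z \<and> v \<in> A_set z T) \<longrightarrow>
           (\<forall>\<mu>\<in>Free z. \<forall>e>0. \<exists>\<nu>\<in>A_set z T. dnorm z (\<lambda>\<phi>. \<nu> \<phi> - \<mu> \<phi>) < e))
       \<and> ((\<exists>\<mu>\<in>Free z. \<exists>r>0. \<forall>\<nu>\<in>Free z. dnorm z (\<lambda>\<phi>. \<nu> \<phi> - \<mu> \<phi>) < r \<longrightarrow> \<nu> \<in> A_set z T) \<longrightarrow>
           (\<forall>\<mu>\<in>Free z. \<forall>e>0. \<exists>\<nu>\<in>A_set z T. dnorm z (\<lambda>\<phi>. \<nu> \<phi> - \<mu> \<phi>) < e))
       \<and> ((\<exists>x. filterlim (\<lambda>n. dist z ((f ^^ n) x)) at_top sequentially) \<longrightarrow>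
           (\<forall>\<mu>\<in>Free z. \<forall>e>0. \<exists>\<nu>\<in>A_set z T. dnorm z (\<lambda>\<phi>. \<nu> \<phi> - \<mu> \<phi>) < e))"
proof -
  have dense: "\<forall>\<mu>\<in>Free z. \<forall>e>0. \<exists>\<nu>\<in>A_set z T. dnorm z (\<lambda>\<phi>. \<nu> \<phi> - \<mu> \<phi>) < e"
    if "v \<in> span_delta z" and "v \<in> A_set z T" for v
    using A_set_dense_if_meets_span_delta[OF assms(4) that] by blast
  have interior: "\<exists>v. v \<in> span_delta z \<and> v \<in> A_set z T"
    if "\<mu> \<in> Free z" and "r > 0"
      and "\<forall>\<nu>\<in>Free z. dnorm z (\<lambda>\<phi>. \<nu> \<phi> - \<mu> \<phi>) < r \<longrightarrow> \<nu> \<in> A_set z T" for \<mu> r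
    using span_delta_meets_A_set_if_interior[OF that] .
  have escape: "delta z x \<in> A_set z T"
    if "filterlim (\<lambda>n. dist z ((f ^^ n) x)) at_top sequentially" for x
    using delta_in_A_set_if_orbit_escapes[OF assms(4) that] .
  show ?thesis
    using dense interior escape delta_in_span_delta by (intro conjI impI) blast+
qed

end
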